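(* Let $K\ge L\ge T\ge 2$ be integers, let $\kappa,\lambda$ be the smallest non-negative integers such that $K+1+\kappa$ and $L+1+\lambda$ are coprime to $T-1$, and put $K^\star=K+1+\kappa$, $L^\star=L+1+\lambda$, $\bar T=T-1$, $q=K^\star L^\star+\bar T^2$. Then $K^\star$, $L^\star$ and $\bar T$ are each coprime to $q$. Moreover, for every integer $x$ coprime to $q$ there exists a unique integer $y\in\{0,\dots,q-1\}$ with $x\bar T+yK^\star\equiv 0\pmod q$, and this $y$ is coprime to $q$. *)

theory Defs
  imports Main "HOL-Number_Theory.Cong"
begin

definition shift_coprime :: "int \<Rightarrow> int \<Rightarrow> nat" where
  "shift_coprime K T = (LEAST k::nat. coprime (K + 1 + int k) (T - 1))"

end

theory Submission
  imports Defs
begin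

text \<open>Each of \<open>K\<^sup>\<star>\<close>, \<open>L\<^sup>\<star>\<close>, \<open>T - 1\<close> is coprime to the remaining summand of
  \<open>q = K\<^sup>\<star> L\<^sup>\<star> + (T - 1)\<^sup>2\<close>, hence to \<open>q\<close>. So \<open>K\<^sup>\<star>\<close> is a unit modulo \<open>q\<close>,
  the congruence has the unique residue \<open>y \<equiv> -x (T - 1) (K\<^sup>\<star>)\<^sup>-\<^sup>1\<close> as solution,
  and this \<open>y\<close> is a product of units modulo \<open>q\<close>.\<close>

lemma coprime_mult_add_iff:
  "coprime a (a * b + c) \<longleftrightarrow> coprime a c" for a b c :: "'a::semiring_gcd"
  using gcd_add_mult[of a b c] by (simp add: coprime_iff_gcd_eq_1 mult.commute)

lemma ex_nat_coprime_shift: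
  fixes a m :: int
  assumes "m \<noteq> 0"
  shows "\<exists>k::nat. coprime (a + int k) m"
proof
  define k where "k = nat ((1 - a) mod \<bar>m\<bar>)"
  have "int k = (1 - a) mod \<bar>m\<bar>"
    using assms by (simp add: k_def)
  then have "[1 = a + int k] (mod \<bar>m\<bar>)"
    unfolding cong_def by (simp add: mod_add_right_eq)
  then have "coprime (a + int k) \<bar>m\<bar>"
    by (rule cong_imp_coprime) simp
  then show "coprime (a + int k) m"
    by simp
qed

lemma coprime_shift_coprime:
  assumes "T \<noteq> 1"
  shows "coprime (K + 1 + int (shift_coprime K T)) (T - 1)"
  unfolding shift_coprime_def
  by (rule LeastI_ex) (rule ex_nat_coprime_shift, use assms in simp)

lemma cong_linear_iff:
  fixes a b u y q :: "'a::{unique_euclidean_ring, euclidean_ring_gcd}"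
  assumes "[a * u = 1] (mod q)"
  shows "[b + y * a = 0] (mod q) \<longleftrightarrow> [y = - b * u] (mod q)"
proof -
  have "coprime (a * u) q"
    using cong_sym[OF assms] by (rule cong_imp_coprime) simp
  then have "coprime a q"
    by simp
  have "[b + y * a = 0] (mod q) \<longleftrightarrow> [y * a = - b] (mod q)"
    by (metis add.commute add.right_neutral add_uminus_conv_diff cong_add_lcancel
        diff_add_cancel)
  also have "\<dots> \<longleftrightarrow> [y * a = - b * u * a] (mod q)"
    using cong_scalar_left[OF assms, of "- b"]
    by (metis (no_types, lifting) cong_sym cong_trans mult.assoc mult.commute mult_1_right)
  also have "\<dots> \<longleftrightarrow> [y = - b * u] (mod q)"
    using \<open>coprime a q\<close> by (rule cong_mult_rcancel)
  finally show ?thesis .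
qed

lemma ex1_cong_linear_solution:
  fixes a b q :: int
  assumes "coprime a q" and "q > 0"
  shows "\<exists>!y. y \<in> {0..q - 1} \<and> [b + y * a = 0] (mod q)"
proof -
  obtain u where u: "[a * u = 1] (mod q)"
    using cong_solve_coprime_int[OF assms(1)] by blast
  have "y \<in> {0..q - 1} \<and> [y = - b * u] (mod q) \<longleftrightarrow> y = (- b * u) mod q" for y
    using assms(2) by (auto simp add: cong_def)
  then have "y \<in> {0..q - 1} \<and> [b + y * a = 0] (mod q) \<longleftrightarrow> y = (- b * u) mod q" for y
    by (simp add: cong_linear_iff[OF u])
  then show ?thesis
    by auto
qed

lemma coprime_cong_linear_solution:
  fixes a b y q :: "'a::{unique_euclidean_ring, euclidean_ring_gcd}"
  assumes "[b + y * a = 0] (mod q)" and "coprime b q"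
  shows "coprime y q"
proof (rule coprimeI)
  fix d
  assume "d dvd y" and "d dvd q"
  moreover from assms(1) have "q dvd b + y * a"
    by (simp add: cong_0_iff)
  ultimately have "d dvd b"
    by (metis dvd_add_left_iff dvd_mult2 dvd_trans)
  with \<open>d dvd q\<close> assms(2) show "is_unit d"
    by (rule coprime_common_divisor[rotated -1])
qed

theorem claim1:
  fixes K L T :: int
  assumes "K \<ge> L" and "L \<ge> T" and "T \<ge> 2"
  defines "Ks \<equiv> K + 1 + int (shift_coprime K T)"
      and "Ls \<equiv> L + 1 + int (shift_coprime L T)"
      and "Tb \<equiv> T - 1"
      and "q \<equiv> (K + 1 + int (shift_coprime K T)) * (L + 1 + int (shift_coprime L T)) + (T - 1) ^ 2"
  shows "coprime Ks q \<and> coprime Ls q \<and> coprime Tb q \<and>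
         (\<forall>x::int. coprime x q \<longrightarrow>
            (\<exists>!y::int. y \<in> {0..q - 1} \<and> [x * Tb + y * Ks = 0] (mod q)) \<and>
            (\<forall>y::int. y \<in> {0..q - 1} \<and> [x * Tb + y * Ks = 0] (mod q) \<longrightarrow> coprime y q))"
proof -
  have "coprime Ks Tb" "coprime Ls Tb"
    using coprime_shift_coprime assms(3) by (simp_all add: Ks_def Ls_def Tb_def)
  have q: "q = Ks * Ls + Tb ^ 2"
    by (simp add: q_def Ks_def Ls_def Tb_def)
  have Ks: "coprime Ks q"
    using \<open>coprime Ks Tb\<close> coprime_mult_add_iff[of Ks Ls "Tb ^ 2"] by (simp add: q)
  have Ls: "coprime Ls q"
    using \<open>coprime Ls Tb\<close> coprime_mult_add_iff[of Ls Ks "Tb ^ 2"] by (simp add: q mult.commute)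
  have Tb: "coprime Tb q"
    using \<open>coprime Ks Tb\<close> \<open>coprime Ls Tb\<close> coprime_mult_add_iff[of Tb Tb "Ks * Ls"]
    by (simp add: q power2_eq_square add.commute coprime_commute)
  have "q > 0"
    using assms unfolding q_def by (simp add: add_pos_nonneg)
  have "(\<exists>!y. y \<in> {0..q - 1} \<and> [x * Tb + y * Ks = 0] (mod q)) \<and>
        (\<forall>y. y \<in> {0..q - 1} \<and> [x * Tb + y * Ks = 0] (mod q) \<longrightarrow> coprime y q)"
    if "coprime x q" for x
  proof -
    have "coprime (x * Tb) q"
      using \<open>coprime x q\<close> Tb by simp
    then show ?thesis
      using ex1_cong_linear_solution[OF Ks \<open>q > 0\<close>, of "x * Tb"]
        coprime_cong_linear_solution[of "x * Tb" _ Ks q] by blast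
  qed
  with Ks Ls Tb show ?thesis
    by blast
qed

end
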